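(* In the dynamic stochastic block model with noise-free ULSE-n1 embeddings $\tilde{\mathbf{Y}}^{(t)}$ described in the context, for all $i,j\in[n]$ and $t,u\in[T]$: (i) if $\mathbf{P}^{(t)}_{i:}=\mathbf{P}^{(t)}_{j:}$ then $\tilde{\mathbf{Y}}^{(t)}_{i:}=\tilde{\mathbf{Y}}^{(t)}_{j:}$; (ii) if $\mathbf{P}^{(t)}_{i:}=\mathbf{P}^{(u)}_{i:}$ and $\tilde{\mathbf{D}}^{(t)}=\tilde{\mathbf{D}}^{(u)}$ then $\tilde{\mathbf{Y}}^{(t)}_{i:}=\tilde{\mathbf{Y}}^{(u)}_{i:}$.
   Context: Setting: $n$ nodes with labels $z_i\in[K]$, symmetric $\mathbf{B}^{(1)},\dots,\mathbf{B}^{(T)}\in[0,1]^{K\times K}$ with all entries positive, $\rho\in(0,1]$, and edge probability matrices $P^{(t)}_{ij}=\rho B^{(t)}_{z_iz_j}$; $\mathbf{P}^{(t)}_{i:}$ denotes the $i$-th row. Noise-free degrees $\tilde d^{(t)}_i=\sum_jP^{(t)}_{ij}$, $\tilde{\mathbf{D}}^{(t)}=\mathrm{diag}(\tilde d^{(t)}_1,\dots,\tilde d^{(t)}_n)$. Noise-free ULSE-n1 with $d=K-1$: $\tilde{\mathbf{L}}^{(t)}=\mathbf{I}_n-\tilde{\mathbf{D}}^{(t)-1/2}\mathbf{P}^{(t)}\tilde{\mathbf{D}}^{(t)-1/2}$, $\tilde{\mathbf{L}}=[\tilde{\mathbf{L}}^{(1)}\mid\cdots\mid\tilde{\mathbf{L}}^{(T)}]\in\mathbb{R}^{n\times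 nT}$ with singular values $\tilde\sigma_1\le\cdots\le\tilde\sigma_n$; $\tilde{\mathbf{\Sigma}}=\mathrm{diag}(\tilde\sigma_2,\dots,\tilde\sigma_K)$, assumed invertible; $\tilde{\mathbf{U}}\in\mathbb{R}^{n\times d}$, $\tilde{\mathbf{V}}\in\mathbb{R}^{nT\times d}$ with orthonormal columns satisfying $\tilde{\mathbf{L}}\tilde{\mathbf{V}}=\tilde{\mathbf{U}}\tilde{\mathbf{\Sigma}}$, $\tilde{\mathbf{L}}^\top\tilde{\mathbf{U}}=\tilde{\mathbf{V}}\tilde{\mathbf{\Sigma}}$; $\tilde{\mathbf{V}}^{(t)}$ the $t$-th block of $n$ rows of $\tilde{\mathbf{V}}$; and $\tilde{\mathbf{Y}}^{(t)}=\tilde{\mathbf{V}}^{(t)}\tilde{\mathbf{\Sigma}}^{1/2}-\tilde{\mathbf{U}}\tilde{\mathbf{\Sigma}}^{-1/2}$. *)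

theory Defs
  imports Complex_Main
begin

text \<open>Conventions: matrices are functions nat \<Rightarrow> nat \<Rightarrow> real with explicit
  index bounds; all indices are 0-based.  Nodes are 0..n-1, communities 0..K-1,
  time points 0..T-1.  The column index c < n*T of the concatenated matrix
  [L1 | ... | LT] corresponds to block c div n and column c mod n.\<close>

definition dsbm_P :: "real \<Rightarrow> (nat \<Rightarrow> nat \<Rightarrow> nat \<Rightarrow> real) \<Rightarrow> (nat \<Rightarrow> nat)
    \<Rightarrow> nat \<Rightarrow> nat \<Rightarrow> nat \<Rightarrow> real" where
  "dsbm_P \<rho> B z t i j = \<rho> * B t (z i) (z j)"

definition deg :: "nat \<Rightarrow> (nat \<Rightarrow> nat \<Rightarrow> nat \<Rightarrow> real) \<Rightarrow> nat \<Rightarrow> nat \<Rightarrow> real" where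
  "deg n P t i = (\<Sum>j<n. P t i j)"

definition lap :: "nat \<Rightarrow> (nat \<Rightarrow> nat \<Rightarrow> nat \<Rightarrow> real) \<Rightarrow> nat \<Rightarrow> nat \<Rightarrow> nat \<Rightarrow> real" where
  "lap n P t i j = (if i = j then 1 else 0)
      - P t i j / (sqrt (deg n P t i) * sqrt (deg n P t j))"

definition lapcat :: "nat \<Rightarrow> (nat \<Rightarrow> nat \<Rightarrow> nat \<Rightarrow> real) \<Rightarrow> nat \<Rightarrow> nat \<Rightarrow> real" where
  "lapcat n P i c = lap n P (c div n) i (c mod n)"

text \<open>sigma 0 \<le> ... \<le> sigma (m-1) are the singular values (in increasing order) of the
  m x p matrix A with m \<le> p: there is a (thin) singular value decomposition
  A = W diag(sigma) Q^T with W an orthogonal m x m matrix and Q a p x m matrix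
  with orthonormal columns.\<close>
definition singular_values_asc ::
  "nat \<Rightarrow> nat \<Rightarrow> (nat \<Rightarrow> nat \<Rightarrow> real) \<Rightarrow> (nat \<Rightarrow> real) \<Rightarrow> bool" where
  "singular_values_asc m p A \<sigma> \<longleftrightarrow>
     (\<forall>a<m. 0 \<le> \<sigma> a) \<and> (\<forall>a b. a \<le> b \<and> b < m \<longrightarrow> \<sigma> a \<le> \<sigma> b) \<and>
     (\<exists>W Q. (\<forall>a<m. \<forall>b<m. (\<Sum>i<m. W i a * W i b) = (if a = b then 1 else 0)) \<and>
            (\<forall>a<m. \<forall>b<m. (\<Sum>c<p. Q c a * Q c b) = (if a = b then 1 else 0)) \<and>
            (\<forall>i<m. \<forall>c<p. A i c = (\<Sum>a<m. W i a * \<sigma> a * Q c a)))"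

definition orthonormal_cols :: "nat \<Rightarrow> nat \<Rightarrow> (nat \<Rightarrow> nat \<Rightarrow> real) \<Rightarrow> bool" where
  "orthonormal_cols r d M \<longleftrightarrow>
     (\<forall>a<d. \<forall>b<d. (\<Sum>i<r. M i a * M i b) = (if a = b then 1 else 0))"

text \<open>Embedding Y^(t) = V^(t) Sigma^{1/2} - U Sigma^{-1/2}, where
  Sigma = diag(sigma_2,...,sigma_K) (1-based), i.e. entry a (0-based) is sigma (a+1)
  in our 0-based indexing of the singular values.\<close>
definition ulse_Y :: "nat \<Rightarrow> (nat \<Rightarrow> real) \<Rightarrow> (nat \<Rightarrow> nat \<Rightarrow> real) \<Rightarrow> (nat \<Rightarrow> nat \<Rightarrow> real)
    \<Rightarrow> nat \<Rightarrow> nat \<Rightarrow> nat \<Rightarrow> real" where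
  "ulse_Y n \<sigma> U V t i a = V (t * n + i) a * sqrt (\<sigma> (a + 1)) - U i a / sqrt (\<sigma> (a + 1))"

end

theory Submission
  imports Defs
begin

text \<open>Every block L^(t) is symmetric, so the row of L^T U = V \<Sigma> belonging to
  column (t, i) of L reads V^(t)_i \<Sigma> = U_i - (A^(t) U)_i, where
  A^(t) = D^(t)^(-1/2) P^(t) D^(t)^(-1/2) is the normalised adjacency matrix.  Hence
  Y^(t)_i = (V^(t)_i \<Sigma> - U_i) \<Sigma>^(-1/2) = - (A^(t) U)_i \<Sigma>^(-1/2), which depends
  only on row i of P^(t) and on the degrees at time t.  Besides this relation only the
  symmetry of the B^(t) and the positivity of \<sigma>_2, ..., \<sigma>_K are used.\<close>

definition norm_adj :: "nat \<Rightarrow> (nat \<Rightarrow> nat \<Rightarrow> nat \<Rightarrow> real) \<Rightarrow> nat \<Rightarrow> nat \<Rightarrow> nat \<Rightarrow> real" where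
  "norm_adj n P t i j = P t i j / (sqrt (deg n P t i) * sqrt (deg n P t j))"

lemma lap_eq_norm_adj: "lap n P t i j = (if i = j then 1 else 0) - norm_adj n P t i j"
  by (simp add: lap_def norm_adj_def)

lemma norm_adj_sym: "P t i j = P t j i \<Longrightarrow> norm_adj n P t i j = norm_adj n P t j i"
  by (simp add: norm_adj_def mult.commute)

lemma lapcat_block: "i < n \<Longrightarrow> lapcat n P k (t * n + i) = lap n P t k i"
  by (simp add: lapcat_def)

lemma block_index_less: "t < T \<Longrightarrow> i < n \<Longrightarrow> t * n + i < n * (T :: nat)"
proof -
  assume "t < T" "i < n"
  then have "t * n + i < (t + 1) * n" by simp
  also have "\<dots> \<le> T * n" using \<open>t < T\<close> by (intro mult_right_mono) auto
  finally show ?thesis by (simp add: mult.commute)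
qed

lemma sum_lap_col:
  assumes "\<forall>k<n. P t k i = P t i k" "i < n"
  shows "(\<Sum>k<n. lap n P t k i * M k a) = M i a - (\<Sum>k<n. norm_adj n P t i k * M k a)"
proof -
  have "(\<Sum>k<n. lap n P t k i * M k a)
      = (\<Sum>k<n. (if k = i then M k a else 0) - norm_adj n P t i k * M k a)"
    using assms(1) by (intro sum.cong) (auto simp: lap_eq_norm_adj norm_adj_sym left_diff_distrib)
  also have "\<dots> = M i a - (\<Sum>k<n. norm_adj n P t i k * M k a)"
    using assms(2) by (simp add: sum_subtractf)
  finally show ?thesis .
qed

lemma mult_sqrt_diff_divide_sqrt:
  fixes s :: real
  assumes "0 < s"
  shows "v * sqrt s - u / sqrt s = (v * s - u) / sqrt s"
proof -
  have "v * sqrt s = v * s / sqrt s"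
    using assms by (simp add: field_simps)
  then show ?thesis by (simp add: diff_divide_distrib)
qed

lemma ulse_Y_eq_norm_adj:
  assumes symP: "\<forall>k<n. P t k i = P t i k" and i: "i < n" and \<sigma>_pos: "0 < \<sigma> (a + 1)"
    and LtU: "(\<Sum>k<n. lapcat n P k (t * n + i) * U k a) = V (t * n + i) a * \<sigma> (a + 1)"
  shows "ulse_Y n \<sigma> U V t i a = - (\<Sum>k<n. norm_adj n P t i k * U k a) / sqrt (\<sigma> (a + 1))"
proof -
  have row: "V (t * n + i) a * \<sigma> (a + 1) = U i a - (\<Sum>k<n. norm_adj n P t i k * U k a)"
    using LtU by (simp add: lapcat_block[OF i] sum_lap_col[where P = P and t = t, OF symP i])
  have "ulse_Y n \<sigma> U V t i a = (V (t * n + i) a * \<sigma> (a + 1) - U i a) / sqrt (\<sigma> (a + 1))"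
    unfolding ulse_Y_def by (rule mult_sqrt_diff_divide_sqrt[OF \<sigma>_pos])
  then show ?thesis
    by (simp only: row) simp
qed

lemma deg_eq_of_row_eq: "\<forall>k<n. P t i k = P u j k \<Longrightarrow> deg n P t i = deg n P u j"
  by (simp add: deg_def)

lemma sum_norm_adj_row_eq:
  assumes "\<forall>k<n. P t i k = P u j k" "\<forall>k<n. deg n P t k = deg n P u k"
  shows "(\<Sum>k<n. norm_adj n P t i k * M k a) = (\<Sum>k<n. norm_adj n P u j k * M k a)"
  using assms deg_eq_of_row_eq[where P = P and t = t and u = u, OF assms(1)]
  by (intro sum.cong) (auto simp: norm_adj_def)

theorem theorem3:
  fixes n K T :: nat and z :: "nat \<Rightarrow> nat" and B :: "nat \<Rightarrow> nat \<Rightarrow> nat \<Rightarrow> real"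
    and \<rho> :: real and \<sigma> :: "nat \<Rightarrow> real" and U V :: "nat \<Rightarrow> nat \<Rightarrow> real"
  defines "P \<equiv> dsbm_P \<rho> B z"
  defines "d \<equiv> K - 1"
  assumes K_le_n: "K \<le> n"
    and labels: "\<forall>i<n. z i < K"
    and B_sym: "\<forall>t<T. \<forall>k<K. \<forall>l<K. B t k l = B t l k"
    and B_range: "\<forall>t<T. \<forall>k<K. \<forall>l<K. 0 < B t k l \<and> B t k l \<le> 1"
    and rho: "0 < \<rho>" "\<rho> \<le> 1"
    and sv: "singular_values_asc n (n * T) (lapcat n P) \<sigma>"
    and Sigma_inv: "\<forall>a<d. \<sigma> (a + 1) \<noteq> 0"
    and U_on: "orthonormal_cols n d U"
    and V_on: "orthonormal_cols (n * T) d V"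
    and LV: "\<forall>i<n. \<forall>a<d. (\<Sum>c<n * T. lapcat n P i c * V c a) = U i a * \<sigma> (a + 1)"
    and LtU: "\<forall>c<n * T. \<forall>a<d. (\<Sum>i<n. lapcat n P i c * U i a) = V c a * \<sigma> (a + 1)"
  shows "(\<forall>t<T. \<forall>i<n. \<forall>j<n. (\<forall>k<n. P t i k = P t j k) \<longrightarrow>
            (\<forall>a<d. ulse_Y n \<sigma> U V t i a = ulse_Y n \<sigma> U V t j a))
       \<and> (\<forall>t<T. \<forall>u<T. \<forall>i<n. (\<forall>k<n. P t i k = P u i k) \<and> (\<forall>k<n. deg n P t k = deg n P u k) \<longrightarrow>
            (\<forall>a<d. ulse_Y n \<sigma> U V t i a = ulse_Y n \<sigma> U V u i a))"
proof -
  have \<sigma>_pos: "0 < \<sigma> (a + 1)" if "a < d" for a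
  proof -
    have "a + 1 < n" using that K_le_n by (simp add: d_def)
    then have "0 \<le> \<sigma> (a + 1)" using sv by (simp add: singular_values_asc_def)
    then show ?thesis using Sigma_inv that by force
  qed
  have symP: "\<forall>k<n. P t k i = P t i k" if "t < T" "i < n" for t i
    using that labels B_sym by (auto simp: P_def dsbm_P_def)
  have Y: "ulse_Y n \<sigma> U V t i a = - (\<Sum>k<n. norm_adj n P t i k * U k a) / sqrt (\<sigma> (a + 1))"
    if "t < T" "i < n" "a < d" for t i a
    using symP[OF that(1,2)] that(2) \<sigma>_pos[OF that(3)] LtU block_index_less[OF that(1,2)] that(3)
    by (intro ulse_Y_eq_norm_adj) auto
  show ?thesis
  proof (intro conjI allI impI)
    fix t i j a
    assume t: "t < T" and i: "i < n" and j: "j < n" and rows: "\<forall>k<n. P t i k = P t j k"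
      and a: "a < d"
    have "(\<Sum>k<n. norm_adj n P t i k * U k a) = (\<Sum>k<n. norm_adj n P t j k * U k a)"
      using rows by (intro sum_norm_adj_row_eq) auto
    then show "ulse_Y n \<sigma> U V t i a = ulse_Y n \<sigma> U V t j a"
      by (simp only: Y[OF t i a] Y[OF t j a])
  next
    fix t u i a
    assume t: "t < T" and u: "u < T" and i: "i < n" and a: "a < d"
      and rows: "(\<forall>k<n. P t i k = P u i k) \<and> (\<forall>k<n. deg n P t k = deg n P u k)"
    have "(\<Sum>k<n. norm_adj n P t i k * U k a) = (\<Sum>k<n. norm_adj n P u i k * U k a)"
      using rows by (intro sum_norm_adj_row_eq) auto
    then show "ulse_Y n \<sigma> U V t i a = ulse_Y n \<sigma> U V u i a"
      by (simp only: Y[OF t i a] Y[OF u i a])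
  qed
qed

end
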